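(* For each $t\in[0,1)$ the operator $C_t\colon H(\mathbb{D})\to H(\mathbb{D})$ is a topological isomorphism of $H(\mathbb{D})$ onto itself (a continuous linear bijection with continuous inverse) and, hence, it is not compact.
   Context: $\mathbb{D}=\{z\in\mathbb{C}:|z|<1\}$ and $H(\mathbb{D})$ is the Fréchet space of holomorphic functions on $\mathbb{D}$ with the topology of uniform convergence on compact subsets. For $t\in[0,1]$, $C_t$ is defined on $f\in H(\mathbb{D})$ by $C_tf(0)=f(0)$ and $C_tf(z)=\frac{1}{z}\int_0^z\frac{f(\xi)}{1-t\xi}\,d\xi$ for $z\neq0$. A linear map $T$ between locally convex spaces is compact if some neighbourhood of $0$ is mapped onto a relatively compact set. *)

theory Defs
  imports "HOL-Complex_Analysis.Complex_Analysis"
begin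

text \<open>Elements of H(D) are represented as functions complex => complex that are holomorphic
  on the unit disc and (for uniqueness of representatives) vanish outside it.\<close>

definition HD :: "(complex \<Rightarrow> complex) set" where
  "HD = {f. f holomorphic_on ball 0 1 \<and> (\<forall>z. z \<notin> ball 0 1 \<longrightarrow> f z = 0)}"

definition HD_open :: "(complex \<Rightarrow> complex) set \<Rightarrow> bool" where
  "HD_open U \<longleftrightarrow> U \<subseteq> HD \<and>
     (\<forall>f\<in>U. \<exists>K e. compact K \<and> K \<subseteq> ball 0 1 \<and> e > 0 \<and>
        {g\<in>HD. \<forall>z\<in>K. cmod (g z - f z) < e} \<subseteq> U)"

lemma istopology_HD_open: "istopology HD_open"
  unfolding istopology_def
proof (intro conjI allI impI)
  fix S T assume S: "HD_open S" and T: "HD_open T"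
  show "HD_open (S \<inter> T)"
    unfolding HD_open_def
  proof (intro conjI ballI)
    show "S \<inter> T \<subseteq> HD" using S unfolding HD_open_def by blast
  next
    fix f assume f: "f \<in> S \<inter> T"
    obtain K1 e1 where 1: "compact K1" "K1 \<subseteq> ball 0 1" "e1 > 0"
        "{g\<in>HD. \<forall>z\<in>K1. cmod (g z - f z) < e1} \<subseteq> S"
      using S f unfolding HD_open_def by blast
    obtain K2 e2 where 2: "compact K2" "K2 \<subseteq> ball 0 1" "e2 > 0"
        "{g\<in>HD. \<forall>z\<in>K2. cmod (g z - f z) < e2} \<subseteq> T"
      using T f unfolding HD_open_def by blast
    show "\<exists>K e. compact K \<and> K \<subseteq> ball 0 1 \<and> e > 0 \<and>
        {g\<in>HD. \<forall>z\<in>K. cmod (g z - f z) < e} \<subseteq> S \<inter> T"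
    proof (intro exI conjI)
      show "compact (K1 \<union> K2)" using 1(1) 2(1) by (rule compact_Un)
      show "K1 \<union> K2 \<subseteq> ball 0 1" using 1(2) 2(2) by (rule Un_least)
      show "min e1 e2 > 0" using 1(3) 2(3) by simp
      show "{g\<in>HD. \<forall>z\<in>K1 \<union> K2. cmod (g z - f z) < min e1 e2} \<subseteq> S \<inter> T"
      proof
        fix g assume g: "g \<in> {g\<in>HD. \<forall>z\<in>K1 \<union> K2. cmod (g z - f z) < min e1 e2}"
        have "g \<in> {g\<in>HD. \<forall>z\<in>K1. cmod (g z - f z) < e1}" using g by simp
        then have "g \<in> S" using 1(4) by blast
        moreover have "g \<in> {g\<in>HD. \<forall>z\<in>K2. cmod (g z - f z) < e2}" using g by simp
        then have "g \<in> T" using 2(4) by blast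
        ultimately show "g \<in> S \<inter> T" by blast
      qed
    qed
  qed
next
  fix \<K> assume K: "\<forall>K\<in>\<K>. HD_open K"
  show "HD_open (\<Union>\<K>)"
    unfolding HD_open_def
  proof (intro conjI ballI)
    show "\<Union>\<K> \<subseteq> HD" using K unfolding HD_open_def by blast
  next
    fix f assume "f \<in> \<Union>\<K>"
    then obtain U where U: "U \<in> \<K>" "f \<in> U" by (rule UnionE)
    have "HD_open U" using K U(1) by (rule bspec)
    then obtain K0 e where "compact K0" "K0 \<subseteq> ball 0 1" "e > 0"
        "{g\<in>HD. \<forall>z\<in>K0. cmod (g z - f z) < e} \<subseteq> U"
      using U(2) unfolding HD_open_def by blast
    then show "\<exists>K e. compact K \<and> K \<subseteq> ball 0 1 \<and> e > 0 \<and>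
        {g\<in>HD. \<forall>z\<in>K. cmod (g z - f z) < e} \<subseteq> \<Union>\<K>"
      using U by blast
  qed
qed

definition HD_top :: "(complex \<Rightarrow> complex) topology" where
  "HD_top = topology HD_open"

definition Cesaro_op :: "real \<Rightarrow> (complex \<Rightarrow> complex) \<Rightarrow> complex \<Rightarrow> complex" where
  "Cesaro_op t f z =
     (if z = 0 then f 0
      else if z \<in> ball 0 1 then
        (1 / z) * contour_integral (linepath 0 z) (\<lambda>\<xi>. f \<xi> / (1 - of_real t * \<xi>))
      else 0)"

definition HD_linear :: "((complex \<Rightarrow> complex) \<Rightarrow> complex \<Rightarrow> complex) \<Rightarrow> bool" where
  "HD_linear T \<longleftrightarrow> (\<forall>f\<in>HD. \<forall>g\<in>HD. \<forall>a b::complex.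
      T (\<lambda>z. a * f z + b * g z) = (\<lambda>z. a * T f z + b * T g z))"

definition HD_compact_operator :: "((complex \<Rightarrow> complex) \<Rightarrow> complex \<Rightarrow> complex) \<Rightarrow> bool" where
  "HD_compact_operator T \<longleftrightarrow>
     (\<exists>U V. openin HD_top V \<and> (\<lambda>z. 0) \<in> V \<and> V \<subseteq> U \<and> U \<subseteq> topspace HD_top \<and>
        compactin HD_top (HD_top closure_of (T ` U)))"

end

theory Submission
  imports Defs
begin

text \<open>
  Writing \<open>z C\<^sub>t f(z) = \<integral>\<^sub>0\<^sup>z f(\<xi>)/(1 - t\<xi>) d\<xi>\<close> and differentiating shows that \<open>C\<^sub>t\<close> is inverted
  by \<open>g \<mapsto> (1 - tz)(z g)'\<close>. Both maps are continuous: on \<open>|z| \<le> r\<close> the first is bounded by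
  \<open>sup\<^bsub>|z|\<le>r\<^esub> |f| / (1 - t)\<close>, and the second, by the Cauchy estimate for \<open>g'\<close>, by a multiple
  of the supremum of \<open>|g|\<close> on a slightly larger disc. An open linear map cannot be compact on
  \<open>H(D)\<close>: compact subsets of \<open>H(D)\<close> are bounded at every point, whereas a basic
  neighbourhood \<open>{g. sup\<^bsub>K\<^esub> |g| < \<epsilon>}\<close> of \<open>0\<close> contains all \<open>c z\<^sup>m\<close> with \<open>c r\<^sup>m < \<epsilon>\<close>, which are
  unbounded at any point of modulus larger than \<open>r\<close>.
\<close>

lemma openin_HD_top: "openin HD_top = HD_open"
  unfolding HD_top_def using istopology_HD_open by simp

lemma topspace_HD_top: "topspace HD_top = HD"
proof -
  have "HD_open HD" unfolding HD_open_def
    by (intro conjI ballI exI[of _ "{}"] exI[of _ 1]) auto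
  moreover have "\<And>U. HD_open U \<Longrightarrow> U \<subseteq> HD" by (simp add: HD_open_def)
  ultimately show ?thesis unfolding topspace_def openin_HD_top by blast
qed

lemma HD_holomorphic: "f \<in> HD \<Longrightarrow> f holomorphic_on ball 0 1"
  by (simp add: HD_def)

lemma HD_intro: "f holomorphic_on ball 0 1 \<Longrightarrow> (\<And>z. z \<notin> ball 0 1 \<Longrightarrow> f z = 0) \<Longrightarrow> f \<in> HD"
  unfolding HD_def by blast

lemma HD_lincomb: "f \<in> HD \<Longrightarrow> g \<in> HD \<Longrightarrow> (\<lambda>z. a * f z + b * g z) \<in> HD"
  unfolding HD_def by (auto intro!: holomorphic_intros)

lemma compact_subset_ball_imp_cball:
  fixes K :: "'a::real_normed_vector set"
  assumes "compact K" "K \<subseteq> ball 0 R" "0 < R"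
  obtains r where "0 < r" "r < R" "K \<subseteq> cball 0 r"
proof (cases "K = {}")
  case True
  then show ?thesis using that[of "R / 2"] assms(3) by simp
next
  case False
  obtain x where x: "x \<in> K" "\<forall>y\<in>K. norm y \<le> norm x"
    using continuous_attains_sup[OF assms(1) False, of norm] continuous_on_norm_id by blast
  have "norm x < R" using x(1) assms(2) by auto
  show ?thesis
  proof (rule that)
    show "K \<subseteq> cball 0 (max (R / 2) (norm x))" using x(2) by (auto simp: subset_iff)
  qed (use \<open>norm x < R\<close> assms(3) in auto)
qed

definition HD_bounded_operator :: "((complex \<Rightarrow> complex) \<Rightarrow> complex \<Rightarrow> complex) \<Rightarrow> bool" where
  "HD_bounded_operator T \<longleftrightarrow> (\<forall>r<1. \<exists>r'<1. \<exists>M>0. \<forall>f\<in>HD. \<forall>\<delta>>0.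
     (\<forall>w\<in>cball 0 r'. cmod (f w) \<le> \<delta>) \<longrightarrow> (\<forall>z\<in>cball 0 r. cmod (T f z) \<le> M * \<delta>))"

lemma continuous_map_HD_top_if_bounded:
  assumes maps: "\<And>f. f \<in> HD \<Longrightarrow> T f \<in> HD" and lin: "HD_linear T"
    and bnd: "HD_bounded_operator T"
  shows "continuous_map HD_top HD_top T"
  unfolding continuous_map_def topspace_HD_top openin_HD_top
proof (intro conjI allI impI)
  show "T \<in> HD \<rightarrow> HD" using maps by blast
next
  fix U assume U: "HD_open U"
  show "HD_open {f \<in> HD. T f \<in> U}"
    unfolding HD_open_def
  proof (intro conjI ballI)
    fix f assume f: "f \<in> {f \<in> HD. T f \<in> U}"
    then obtain K e where K: "compact K" "K \<subseteq> ball 0 1" "e > 0"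
      and KU: "{g\<in>HD. \<forall>z\<in>K. cmod (g z - T f z) < e} \<subseteq> U"
      using U unfolding HD_open_def by blast
    obtain r where r: "r < 1" "K \<subseteq> cball 0 r"
      using compact_subset_ball_imp_cball[OF K(1,2)] by auto
    obtain r' M where r': "r' < 1" "M > 0" and bound: "\<And>h \<delta> z. h \<in> HD \<Longrightarrow> \<delta> > 0 \<Longrightarrow>
        \<forall>w\<in>cball 0 r'. cmod (h w) \<le> \<delta> \<Longrightarrow> z \<in> cball 0 r \<Longrightarrow> cmod (T h z) \<le> M * \<delta>"
      using bnd r(1) unfolding HD_bounded_operator_def by (metis (no_types, lifting))
    have "T g \<in> U" if g: "g \<in> HD" "\<forall>w\<in>cball 0 r'. cmod (g w - f w) < e / (2 * M)" for g
    proof -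
      have "T (\<lambda>z. 1 * g z + (-1) * f z) = (\<lambda>z. 1 * T g z + (-1) * T f z)"
        using lin g(1) f unfolding HD_linear_def by blast
      then have diff: "T (\<lambda>z. g z - f z) = (\<lambda>z. T g z - T f z)" by simp
      have "cmod (T g z - T f z) < e" if "z \<in> K" for z
      proof -
        have "(\<lambda>z. g z - f z) \<in> HD"
          using HD_lincomb[of g f 1 "-1"] g(1) f by simp
        moreover have "\<forall>w\<in>cball 0 r'. cmod (g w - f w) \<le> e / (2 * M)"
          using g(2) by (simp add: less_imp_le)
        ultimately have "cmod (T (\<lambda>z. g z - f z) z) \<le> M * (e / (2 * M))"
          using bound[of "\<lambda>z. g z - f z" "e / (2 * M)" z] \<open>z \<in> K\<close> r(2) K(3) r'(2) by auto
        then show ?thesis using K(3) r'(2) by (simp add: diff)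
      qed
      then show ?thesis using KU maps[OF g(1)] by blast
    qed
    then have "{g\<in>HD. \<forall>w\<in>cball 0 r'. cmod (g w - f w) < e / (2 * M)} \<subseteq> {f \<in> HD. T f \<in> U}"
      by blast
    moreover have "cball 0 r' \<subseteq> ball (0::complex) 1" using r'(1) by auto
    ultimately show "\<exists>K e. compact K \<and> K \<subseteq> ball 0 1 \<and> e > 0 \<and>
        {g\<in>HD. \<forall>z\<in>K. cmod (g z - f z) < e} \<subseteq> {f \<in> HD. T f \<in> U}"
      using K(3) r'(2) by (intro exI[of _ "cball 0 r'"] exI[of _ "e / (2 * M)"]) auto
  qed auto
qed

lemma continuous_map_HD_top_eval:
  assumes "z\<^sub>0 \<in> ball 0 1"
  shows "continuous_map HD_top euclidean (\<lambda>g. g z\<^sub>0)"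
  unfolding continuous_map_def topspace_HD_top openin_HD_top
proof (intro conjI allI impI)
  fix U :: "complex set" assume "openin euclidean U"
  show "HD_open {g \<in> HD. g z\<^sub>0 \<in> U}"
    unfolding HD_open_def
  proof (intro conjI ballI)
    fix f assume f: "f \<in> {g \<in> HD. g z\<^sub>0 \<in> U}"
    then obtain e where "e > 0" "ball (f z\<^sub>0) e \<subseteq> U"
      using \<open>openin euclidean U\<close> open_contains_ball by force
    then show "\<exists>K e. compact K \<and> K \<subseteq> ball 0 1 \<and> e > 0 \<and>
        {g\<in>HD. \<forall>z\<in>K. cmod (g z - f z) < e} \<subseteq> {g \<in> HD. g z\<^sub>0 \<in> U}"
      using assms by (intro exI[of _ "{z\<^sub>0}"] exI[of _ e]) (auto simp: dist_norm norm_minus_commute)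
  qed auto
qed auto

lemma compactin_HD_top_imp_bounded_at:
  assumes "compactin HD_top S" "z\<^sub>0 \<in> ball 0 1"
  shows "bounded ((\<lambda>g. g z\<^sub>0) ` S)"
  using image_compactin[OF assms(1) continuous_map_HD_top_eval[OF assms(2)]]
  by (simp add: compact_imp_bounded)

lemma HD_neighbourhood_unbounded:
  assumes "compact K" "K \<subseteq> ball 0 1" "e > 0"
  obtains z\<^sub>0 where "z\<^sub>0 \<in> ball 0 1" "\<not> bounded ((\<lambda>g. g z\<^sub>0) ` {g\<in>HD. \<forall>z\<in>K. cmod (g z) < e})"
proof -
  obtain r where r: "0 < r" "r < 1" "K \<subseteq> cball 0 r"
    using compact_subset_ball_imp_cball[OF assms(1,2)] by auto
  define \<rho> where "\<rho> = (1 + r) / 2"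
  have \<rho>: "r < \<rho>" "\<rho> < 1" using r unfolding \<rho>_def by auto
  define z\<^sub>0 where "z\<^sub>0 = complex_of_real \<rho>"
  have z\<^sub>0: "z\<^sub>0 \<in> ball 0 1" "cmod z\<^sub>0 = \<rho>" using \<rho> r unfolding z\<^sub>0_def by auto
  have "\<not> bounded ((\<lambda>g. g z\<^sub>0) ` {g\<in>HD. \<forall>z\<in>K. cmod (g z) < e})"
  proof
    assume "bounded ((\<lambda>g. g z\<^sub>0) ` {g\<in>HD. \<forall>z\<in>K. cmod (g z) < e})"
    then obtain B where B: "\<And>g. g \<in> HD \<Longrightarrow> \<forall>z\<in>K. cmod (g z) < e \<Longrightarrow> cmod (g z\<^sub>0) \<le> B"
      unfolding bounded_iff by blast
    define q where "q = \<rho> / r"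
    obtain m :: nat where m: "2 * B / e < q ^ m"
      using real_arch_pow[of q] \<rho> r by (auto simp: q_def)
    define c where "c = e / (2 * r ^ m)"
    have c: "c > 0" using assms(3) r(1) by (simp add: c_def)
    define g where "g = (\<lambda>z::complex. if z \<in> ball 0 1 then of_real c * z ^ m else 0)"
    have "g \<in> HD"
    proof (rule HD_intro)
      have "(\<lambda>z. of_real c * z ^ m) holomorphic_on ball 0 1" by (intro holomorphic_intros)
      then show "g holomorphic_on ball 0 1"
        by (rule holomorphic_transform) (simp add: g_def)
    qed (simp add: g_def)
    moreover have "cmod (g z) < e" if "z \<in> K" for z
    proof -
      have "cmod (g z) = c * cmod z ^ m"
        using that assms(2) c by (auto simp: g_def norm_mult norm_power)
      also have "\<dots> \<le> c * r ^ m"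
        using that r(3) c by (intro mult_left_mono power_mono) auto
      also have "\<dots> < e" using assms(3) r(1) by (simp add: c_def)
      finally show ?thesis .
    qed
    ultimately have "cmod (g z\<^sub>0) \<le> B" using B by blast
    moreover have "cmod (g z\<^sub>0) = c * \<rho> ^ m"
      using z\<^sub>0 c by (simp add: g_def norm_mult norm_power)
    moreover have "c * \<rho> ^ m = e / 2 * q ^ m"
      by (simp add: c_def q_def power_divide)
    moreover have "B < e / 2 * q ^ m"
      using m assms(3) by (simp add: divide_less_eq mult.commute)
    ultimately show False by linarith
  qed
  with z\<^sub>0(1) show ?thesis using that by blast
qed

lemma not_compactin_HD_top_neighbourhood:
  assumes "compact K" "K \<subseteq> ball 0 1" "e > 0" "{g\<in>HD. \<forall>z\<in>K. cmod (g z) < e} \<subseteq> S"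
  shows "\<not> compactin HD_top S"
proof
  assume "compactin HD_top S"
  obtain z\<^sub>0 where "z\<^sub>0 \<in> ball 0 1" "\<not> bounded ((\<lambda>g. g z\<^sub>0) ` {g\<in>HD. \<forall>z\<in>K. cmod (g z) < e})"
    using HD_neighbourhood_unbounded[OF assms(1-3)] by blast
  moreover have "(\<lambda>g. g z\<^sub>0) ` {g\<in>HD. \<forall>z\<in>K. cmod (g z) < e} \<subseteq> (\<lambda>g. g z\<^sub>0) ` S"
    using assms(4) by (rule image_mono)
  ultimately show False
    using compactin_HD_top_imp_bounded_at[OF \<open>compactin HD_top S\<close>] bounded_subset by blast
qed

lemma not_HD_compact_operator_if_open_map:
  assumes maps: "T ` HD \<subseteq> HD" and zero: "T (\<lambda>z. 0) = (\<lambda>z. 0)"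
    and open_map: "open_map HD_top HD_top T"
  shows "\<not> HD_compact_operator T"
proof
  assume "HD_compact_operator T"
  then obtain U V where V: "openin HD_top V" "(\<lambda>z. 0) \<in> V" "V \<subseteq> U" "U \<subseteq> HD"
    and compact: "compactin HD_top (HD_top closure_of (T ` U))"
    unfolding HD_compact_operator_def topspace_HD_top by blast
  have "openin HD_top (T ` V)" using open_map V(1) unfolding open_map_def by blast
  then have nbhd: "\<forall>f\<in>T ` V. \<exists>K e. compact K \<and> K \<subseteq> ball 0 1 \<and> e > 0 \<and>
      {g\<in>HD. \<forall>z\<in>K. cmod (g z - f z) < e} \<subseteq> T ` V"
    unfolding openin_HD_top HD_open_def by (rule conjunct2)
  have "(\<lambda>z. 0) \<in> T ` V" using V(2) zero by force
  from bspec[OF nbhd this] obtain K e where K: "compact K" "K \<subseteq> ball 0 1" "e > 0"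
    and KV: "{g\<in>HD. \<forall>z\<in>K. cmod (g z) < e} \<subseteq> T ` V"
    by auto
  note KV
  also have "T ` V \<subseteq> T ` U" using V(3) by (rule image_mono)
  also have "T ` U \<subseteq> HD_top closure_of (T ` U)"
    using V(4) maps by (intro closure_of_subset) (auto simp: topspace_HD_top)
  finally show False
    using not_compactin_HD_top_neighbourhood[OF K] compact by blast
qed

lemma norm_one_minus_mult_ge:
  fixes t :: real and \<xi> :: complex
  assumes "0 \<le> t" "cmod \<xi> \<le> 1"
  shows "1 - t \<le> cmod (1 - of_real t * \<xi>)"
proof -
  have "cmod (of_real t * \<xi>) \<le> t"
    using assms by (simp add: norm_mult mult_left_le)
  then show ?thesis using norm_triangle_ineq2[of 1 "of_real t * \<xi>"] by simp
qed

lemma one_minus_mult_nonzero: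
  fixes t :: real and \<xi> :: complex
  assumes "0 \<le> t" "t < 1" "cmod \<xi> \<le> 1"
  shows "1 - of_real t * \<xi> \<noteq> 0"
  using norm_one_minus_mult_ge[OF assms(1,3)] assms(2) by auto

lemma Cesaro_integrand_holomorphic:
  assumes "0 \<le> t" "t < 1" "f \<in> HD"
  shows "(\<lambda>\<xi>. f \<xi> / (1 - of_real t * \<xi>)) holomorphic_on ball 0 1"
  using assms one_minus_mult_nonzero[OF assms(1,2)] unfolding HD_def
  by (auto intro!: holomorphic_intros)

lemma Cesaro_integrand_integrable:
  assumes "0 \<le> t" "t < 1" "f \<in> HD" "z \<in> ball 0 1"
  shows "(\<lambda>\<xi>. f \<xi> / (1 - of_real t * \<xi>)) contour_integrable_on linepath 0 z"
  using assms(4)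
  by (intro contour_integrable_holomorphic_simple[OF Cesaro_integrand_holomorphic[OF assms(1-3)]])
     (auto simp: closed_segment_subset convex_ball)

lemma Cesaro_op_outside: "z \<notin> ball 0 1 \<Longrightarrow> Cesaro_op t f z = 0"
  by (auto simp: Cesaro_op_def)

lemma Cesaro_op_primitive:
  assumes "0 \<le> t" "t < 1" "f \<in> HD"
  obtains G where "\<And>x. x \<in> ball 0 1 \<Longrightarrow> (G has_field_derivative f x / (1 - of_real t * x)) (at x)"
    and "\<And>z. z \<in> ball 0 1 \<Longrightarrow> Cesaro_op t f z = (if z = 0 then deriv G 0 else (G z - G 0) / (z - 0))"
proof -
  obtain G where G: "\<And>x. x \<in> ball 0 1 \<Longrightarrow>
      (G has_field_derivative f x / (1 - of_real t * x)) (at x within ball 0 1)"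
    using holomorphic_convex_primitive'[OF convex_ball open_ball Cesaro_integrand_holomorphic[OF assms]]
    by blast
  have G': "(G has_field_derivative f x / (1 - of_real t * x)) (at x)" if "x \<in> ball 0 1" for x
    using G[OF that] at_within_open[OF that open_ball] by metis
  have "contour_integral (linepath 0 z) (\<lambda>\<xi>. f \<xi> / (1 - of_real t * \<xi>)) = G z - G 0"
    if "z \<in> ball 0 1" for z
    using contour_integral_primitive[OF G valid_path_linepath, of 0 z] that
    by (auto simp: closed_segment_subset convex_ball intro!: contour_integral_unique)
  moreover have "deriv G 0 = f 0"
    using G'[of 0] by (simp add: DERIV_imp_deriv)
  ultimately show ?thesis
    using that[OF G'] by (simp add: Cesaro_op_def)
qed

lemma Cesaro_op_HD:
  assumes "0 \<le> t" "t < 1" "f \<in> HD"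
  shows "Cesaro_op t f \<in> HD"
proof -
  obtain G where G': "\<And>x. x \<in> ball 0 1 \<Longrightarrow> (G has_field_derivative f x / (1 - of_real t * x)) (at x)"
    and C: "\<And>z. z \<in> ball 0 1 \<Longrightarrow> Cesaro_op t f z = (if z = 0 then deriv G 0 else (G z - G 0) / (z - 0))"
    using Cesaro_op_primitive[OF assms] by blast
  have "G holomorphic_on ball 0 1"
    using G' by (meson field_differentiable_def holomorphic_on_open open_ball)
  then have "(\<lambda>z. if z = 0 then deriv G 0 else (G z - G 0) / (z - 0)) holomorphic_on ball 0 1"
    by (rule pole_lemma_open[OF _ open_ball])
  then have "Cesaro_op t f holomorphic_on ball 0 1"
    by (rule holomorphic_transform) (simp add: C)
  then show ?thesis by (rule HD_intro) (rule Cesaro_op_outside)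
qed

lemma Cesaro_op_linear:
  assumes "0 \<le> t" "t < 1"
  shows "HD_linear (Cesaro_op t)"
  unfolding HD_linear_def
proof (intro ballI allI ext)
  fix f g :: "complex \<Rightarrow> complex" and a b z :: complex
  assume f: "f \<in> HD" and g: "g \<in> HD"
  show "Cesaro_op t (\<lambda>z. a * f z + b * g z) z = a * Cesaro_op t f z + b * Cesaro_op t g z"
  proof (cases "z = 0 \<or> z \<notin> ball 0 1")
    case True
    then show ?thesis by (auto simp: Cesaro_op_def)
  next
    case False
    let ?I = "\<lambda>h. contour_integral (linepath 0 z) (\<lambda>\<xi>. h \<xi> / (1 - of_real t * \<xi>))"
    have "((\<lambda>\<xi>. a * (f \<xi> / (1 - of_real t * \<xi>)) + b * (g \<xi> / (1 - of_real t * \<xi>)))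
            has_contour_integral (a * ?I f + b * ?I g)) (linepath 0 z)"
      using False
      by (intro has_contour_integral_add has_contour_integral_lmul has_contour_integral_integral
          Cesaro_integrand_integrable[OF assms f] Cesaro_integrand_integrable[OF assms g]) auto
    then have "?I (\<lambda>z. a * f z + b * g z) = a * ?I f + b * ?I g"
      by (simp add: add_divide_distrib contour_integral_unique)
    then show ?thesis using False by (simp add: Cesaro_op_def algebra_simps)
  qed
qed

lemma Cesaro_op_bounded:
  assumes t: "0 \<le> t" "t < 1"
  shows "HD_bounded_operator (Cesaro_op t)"
  unfolding HD_bounded_operator_def
proof (intro allI impI)
  fix r :: real assume r: "r < 1"
  show "\<exists>r'<1. \<exists>M>0. \<forall>f\<in>HD. \<forall>\<delta>>0. (\<forall>w\<in>cball 0 r'. cmod (f w) \<le> \<delta>) \<longrightarrow>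
      (\<forall>z\<in>cball 0 r. cmod (Cesaro_op t f z) \<le> M * \<delta>)"
  proof (rule exI[of _ r], intro conjI exI[of _ "1 / (1 - t)"] ballI allI impI)
    show "1 / (1 - t) > 0" using t by simp
    fix f :: "complex \<Rightarrow> complex" and \<delta> :: real and z :: complex
    assume f: "f \<in> HD" and \<delta>: "\<delta> > 0"
      and f_le: "\<forall>w\<in>cball 0 r. cmod (f w) \<le> \<delta>" and z: "z \<in> cball 0 r"
    show "cmod (Cesaro_op t f z) \<le> 1 / (1 - t) * \<delta>"
    proof (cases "z = 0")
      case True
      have "\<delta> \<le> 1 / (1 - t) * \<delta>" using t \<delta> by (simp add: field_simps)
      moreover have "cmod (f 0) \<le> \<delta>" using f_le z True by simp
      ultimately show ?thesis using True by (simp add: Cesaro_op_def)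
    next
      case False
      have zb: "z \<in> ball 0 1" using z r by simp
      have "cmod (f x / (1 - of_real t * x)) \<le> \<delta> / (1 - t)" if x: "x \<in> closed_segment 0 z" for x
      proof -
        have "closed_segment 0 z \<subseteq> cball 0 r"
          using z by (intro closed_segment_subset) (auto intro: order_trans[OF norm_ge_zero])
        with x have "x \<in> cball 0 r" by blast
        then have "cmod (f x) \<le> \<delta>" "1 - t \<le> cmod (1 - of_real t * x)"
          using f_le r t by (auto intro!: norm_one_minus_mult_ge)
        then show ?thesis using t \<delta> by (simp add: norm_divide frac_le)
      qed
      then have "cmod (contour_integral (linepath 0 z) (\<lambda>\<xi>. f \<xi> / (1 - of_real t * \<xi>)))
          \<le> \<delta> / (1 - t) * cmod (z - 0)"
        using t \<delta> by (intro has_contour_integral_bound_linepath[OF has_contour_integral_integral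
            [OF Cesaro_integrand_integrable[OF t f zb]]]) auto
      then show ?thesis using False zb
        by (simp add: Cesaro_op_def norm_divide norm_mult field_simps)
    qed
  qed (use r in auto)
qed

definition Cesaro_inv :: "real \<Rightarrow> (complex \<Rightarrow> complex) \<Rightarrow> complex \<Rightarrow> complex" where
  "Cesaro_inv t g z = (if z \<in> ball 0 1 then (1 - of_real t * z) * (g z + z * deriv g z) else 0)"

lemma Cesaro_inv_HD:
  assumes "g \<in> HD"
  shows "Cesaro_inv t g \<in> HD"
proof (rule HD_intro)
  have "(\<lambda>z. (1 - of_real t * z) * (g z + z * deriv g z)) holomorphic_on ball 0 1"
    using HD_holomorphic[OF assms] by (auto intro!: holomorphic_intros holomorphic_deriv)
  then show "Cesaro_inv t g holomorphic_on ball 0 1"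
    by (rule holomorphic_transform) (simp add: Cesaro_inv_def)
qed (simp add: Cesaro_inv_def)

lemma Cesaro_op_Cesaro_inv:
  assumes "0 \<le> t" "t < 1" "g \<in> HD"
  shows "Cesaro_op t (Cesaro_inv t g) = g"
proof
  fix z :: complex
  show "Cesaro_op t (Cesaro_inv t g) z = g z"
  proof (cases "z = 0 \<or> z \<notin> ball 0 1")
    case True
    then show ?thesis using assms(3) by (auto simp: Cesaro_op_def Cesaro_inv_def HD_def)
  next
    case False
    have "((\<lambda>w. w * g w) has_field_derivative Cesaro_inv t g x / (1 - of_real t * x))
        (at x within ball 0 1)" if x: "x \<in> ball 0 1" for x
    proof -
      have "Cesaro_inv t g x / (1 - of_real t * x) = 1 * g x + deriv g x * x"
        using x one_minus_mult_nonzero[OF assms(1,2), of x] by (simp add: Cesaro_inv_def)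
      then show ?thesis
        using DERIV_mult[OF DERIV_ident holomorphic_derivI[OF HD_holomorphic[OF assms(3)] open_ball x]]
        by simp
    qed
    then have "((\<lambda>\<xi>. Cesaro_inv t g \<xi> / (1 - of_real t * \<xi>)) has_contour_integral
        (pathfinish (linepath 0 z) * g (pathfinish (linepath 0 z))
          - pathstart (linepath 0 z) * g (pathstart (linepath 0 z)))) (linepath 0 z)"
      using False
      by (intro contour_integral_primitive[where S = "ball 0 1", OF _ valid_path_linepath])
         (auto simp: closed_segment_subset convex_ball)
    then have "contour_integral (linepath 0 z) (\<lambda>\<xi>. Cesaro_inv t g \<xi> / (1 - of_real t * \<xi>)) = z * g z"
      by (simp add: contour_integral_unique)
    then show ?thesis using False by (simp add: Cesaro_op_def)
  qed
qed

lemma Cesaro_inv_Cesaro_op: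
  assumes "0 \<le> t" "t < 1" "f \<in> HD"
  shows "Cesaro_inv t (Cesaro_op t f) = f"
proof
  fix x :: complex
  obtain G where G: "\<And>x. x \<in> ball 0 1 \<Longrightarrow> (G has_field_derivative f x / (1 - of_real t * x)) (at x)"
    and C: "\<And>z. z \<in> ball 0 1 \<Longrightarrow> Cesaro_op t f z = (if z = 0 then deriv G 0 else (G z - G 0) / (z - 0))"
    using Cesaro_op_primitive[OF assms] by blast
  let ?g = "Cesaro_op t f"
  show "Cesaro_inv t ?g x = f x"
  proof (cases "x \<in> ball 0 1")
    case False
    then show ?thesis using assms(3) by (auto simp: Cesaro_inv_def HD_def)
  next
    case x: True
    have "((\<lambda>w. w * ?g w) has_field_derivative (1 * ?g x + deriv ?g x * x)) (at x)"
      using DERIV_mult[OF DERIV_ident holomorphic_derivI[OF HD_holomorphic[OF Cesaro_op_HD[OF assms]]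
          open_ball x]] by simp
    moreover have "((\<lambda>w. w * ?g w) has_field_derivative f x / (1 - of_real t * x)) (at x)"
    proof (rule has_field_derivative_transform_within_open[OF _ open_ball x])
      show "((\<lambda>w. G w - G 0) has_field_derivative f x / (1 - of_real t * x)) (at x)"
        using G[OF x] by (auto intro!: derivative_eq_intros)
      show "G w - G 0 = w * ?g w" if "w \<in> ball 0 1" for w
        using C[OF that] by (cases "w = 0") auto
    qed
    ultimately have "?g x + x * deriv ?g x = f x / (1 - of_real t * x)"
      using DERIV_unique by (fastforce simp: mult.commute)
    then show ?thesis
      using x one_minus_mult_nonzero[OF assms(1,2), of x] by (simp add: Cesaro_inv_def)
  qed
qed

lemma Cesaro_inv_linear:
  assumes "0 \<le> t" "t < 1"
  shows "HD_linear (Cesaro_inv t)"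
  unfolding HD_linear_def
proof (intro ballI allI)
  fix f g :: "complex \<Rightarrow> complex" and a b :: complex
  assume f: "f \<in> HD" and g: "g \<in> HD"
  let ?h = "\<lambda>z. a * Cesaro_inv t f z + b * Cesaro_inv t g z"
  have "Cesaro_op t ?h = (\<lambda>z. a * Cesaro_op t (Cesaro_inv t f) z + b * Cesaro_op t (Cesaro_inv t g) z)"
    using Cesaro_op_linear[OF assms] Cesaro_inv_HD f g unfolding HD_linear_def by blast
  also have "\<dots> = (\<lambda>z. a * f z + b * g z)"
    using Cesaro_op_Cesaro_inv[OF assms] f g by simp
  finally have "Cesaro_inv t (\<lambda>z. a * f z + b * g z) = Cesaro_inv t (Cesaro_op t ?h)" by simp
  also have "\<dots> = ?h"
    using Cesaro_inv_Cesaro_op[OF assms] HD_lincomb Cesaro_inv_HD f g by blast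
  finally show "Cesaro_inv t (\<lambda>z. a * f z + b * g z) = ?h" .
qed

lemma Cesaro_inv_bounded:
  assumes t: "0 \<le> t" "t < 1"
  shows "HD_bounded_operator (Cesaro_inv t)"
  unfolding HD_bounded_operator_def
proof (intro allI impI)
  fix r :: real assume r: "r < 1"
  define \<rho> where "\<rho> = (1 - r) / 2"
  have \<rho>: "\<rho> > 0" "r + \<rho> < 1" using r by (auto simp: \<rho>_def field_simps)
  show "\<exists>r'<1. \<exists>M>0. \<forall>f\<in>HD. \<forall>\<delta>>0. (\<forall>w\<in>cball 0 r'. cmod (f w) \<le> \<delta>) \<longrightarrow>
      (\<forall>z\<in>cball 0 r. cmod (Cesaro_inv t f z) \<le> M * \<delta>)"
  proof (rule exI[of _ "r + \<rho>"], intro conjI exI[of _ "2 * (1 + 1 / \<rho>)"] ballI allI impI)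
    show "2 * (1 + 1 / \<rho>) > 0" using \<rho> by (simp add: add_pos_pos)
    fix f :: "complex \<Rightarrow> complex" and \<delta> :: real and z :: complex
    assume f: "f \<in> HD" and \<delta>: "\<delta> > 0"
      and f_le: "\<forall>w\<in>cball 0 (r + \<rho>). cmod (f w) \<le> \<delta>" and z: "z \<in> cball 0 r"
    have zb: "z \<in> ball 0 1" using z r by simp
    have disc: "cball z \<rho> \<subseteq> cball 0 (r + \<rho>)"
    proof
      fix w assume "w \<in> cball z \<rho>"
      then have "cmod (w - z) \<le> \<rho>" by (simp add: dist_norm norm_minus_commute)
      then show "w \<in> cball 0 (r + \<rho>)" using z norm_triangle_sub[of w z] by simp
    qed
    also have "\<dots> \<subseteq> ball 0 1" using \<rho> by auto
    finally have hol: "f holomorphic_on cball z \<rho>"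
      using HD_holomorphic[OF f] holomorphic_on_subset by blast
    have "cmod ((deriv ^^ 1) f z) \<le> fact 1 * \<delta> / \<rho> ^ 1"
      using f_le disc
      by (intro Cauchy_inequality holomorphic_on_subset[OF hol ball_subset_cball]
          holomorphic_on_imp_continuous_on[OF hol] \<rho>(1)) (auto simp: dist_norm)
    then have f'_le: "cmod (deriv f z) \<le> \<delta> / \<rho>" by simp
    have "z \<in> cball 0 (r + \<rho>)" using z \<rho>(1) by simp
    then have f_le_z: "cmod (f z) \<le> \<delta>" using f_le by blast
    have "cmod (1 - of_real t * z) \<le> 1 + t * cmod z"
      using norm_triangle_ineq4[of 1 "of_real t * z"] t by (simp add: norm_mult)
    also have "\<dots> \<le> 2" using t zb by (simp add: mult_le_one)
    finally have factor_le: "cmod (1 - of_real t * z) \<le> 2" .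
    have "cmod (f z + z * deriv f z) \<le> \<delta> + 1 * (\<delta> / \<rho>)"
      using norm_triangle_ineq[of "f z" "z * deriv f z"] f_le_z f'_le zb
        mult_mono[of "cmod z" 1 "cmod (deriv f z)" "\<delta> / \<rho>"] by (simp add: norm_mult)
    then have "cmod (1 - of_real t * z) * cmod (f z + z * deriv f z) \<le> 2 * (\<delta> + \<delta> / \<rho>)"
      using factor_le by (intro mult_mono) auto
    also have "2 * (\<delta> + \<delta> / \<rho>) = 2 * (1 + 1 / \<rho>) * \<delta>" by (simp add: field_simps)
    finally show "cmod (Cesaro_inv t f z) \<le> 2 * (1 + 1 / \<rho>) * \<delta>"
      using zb by (simp add: Cesaro_inv_def norm_mult)
  qed (use \<rho> in auto)
qed

theorem proposition3p3:
  fixes t :: real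
  assumes "0 \<le> t" and "t < 1"
  shows "Cesaro_op t ` HD \<subseteq> HD \<and> HD_linear (Cesaro_op t)
    \<and> homeomorphic_map HD_top HD_top (Cesaro_op t)
    \<and> \<not> HD_compact_operator (Cesaro_op t)"
proof -
  have maps: "Cesaro_op t ` HD \<subseteq> HD" using Cesaro_op_HD[OF assms] by blast
  have "continuous_map HD_top HD_top (Cesaro_op t)"
    using Cesaro_op_HD[OF assms] Cesaro_op_linear[OF assms] Cesaro_op_bounded[OF assms]
    by (rule continuous_map_HD_top_if_bounded)
  moreover have "continuous_map HD_top HD_top (Cesaro_inv t)"
    using Cesaro_inv_HD Cesaro_inv_linear[OF assms] Cesaro_inv_bounded[OF assms]
    by (rule continuous_map_HD_top_if_bounded)
  ultimately have "homeomorphic_maps HD_top HD_top (Cesaro_op t) (Cesaro_inv t)"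
    using Cesaro_inv_Cesaro_op[OF assms] Cesaro_op_Cesaro_inv[OF assms]
    by (simp add: homeomorphic_maps_def topspace_HD_top)
  then have homeo: "homeomorphic_map HD_top HD_top (Cesaro_op t)"
    using homeomorphic_map_maps by blast
  have "Cesaro_op t (\<lambda>z. 0) = (\<lambda>z. 0)" by (simp add: Cesaro_op_def fun_eq_iff)
  then have "\<not> HD_compact_operator (Cesaro_op t)"
    by (intro not_HD_compact_operator_if_open_map[OF maps _ homeomorphic_imp_open_map[OF homeo]])
  with maps Cesaro_op_linear[OF assms] homeo show ?thesis by blast
qed

end
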